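(* Let $M^{n}$ be a biharmonic hypersurface in the unit sphere $S^{n+1}\subset\mathbb{R}^{n+2}$, and let $x_i=\langle X,E_i\rangle|_{M^n}$ for $1\le i\le n+2$, where $X$ is the position vector in $\mathbb{R}^{n+2}$ and $\{E_i\}_{i=1}^{n+2}$ is the standard basis of $\mathbb{R}^{n+2}$. If there exists a function $\phi$ on $M^{n}$ such that \[ \Delta\Delta x_{i}=\phi\, x_{i}\quad\text{for }1\leq i\leq n+2, \] where $\Delta$ is the Laplacian of $M^n$, then $M^{n}$ is minimal.
   Context: For a map $\psi:M\to \bar M$ between Riemannian manifolds, the tension field is $\tau(\psi)=\mathrm{tr}\,\nabla d\psi$, and $\psi$ is biharmonic if it is a critical point of the bienergy $E_2(\psi)=\int_M|\tau(\psi)|^2$, i.e. $\tau_2(\psi)=\Delta\tau(\psi)+\mathrm{tr}\,\bar{R}iem(\tau(\psi),d\psi)d\psi=0$, where $\bar{R}iem(u,v)w=\bar\nabla_u\bar\nabla_v w-\bar\nabla_v\bar\nabla_u w-\bar\nabla_{[u,v]}w$. A hypersurface is biharmonic if its canonical inclusion is a biharmonic map. The Laplacian on functions is $\Delta f=\mathrm{tr}\,\nabla\nabla f$. *)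

theory Defs
  imports "HOL-Analysis.Analysis"
begin

text \<open>Local differential geometry of an immersed hypersurface X : U \<rightarrow> S^(n+1) \<subseteq> R^(n+2),
  U open in R^n, in the coordinates of U.  Index type 'n has n elements, 'm has n+2.\<close>

definition pd :: "'n::finite \<Rightarrow> (real^'n \<Rightarrow> 'b::real_normed_vector) \<Rightarrow> real^'n \<Rightarrow> 'b" where
  "pd i f x = frechet_derivative f (at x) (axis i 1)"

fun ipd :: "'n::finite list \<Rightarrow> (real^'n \<Rightarrow> 'b::real_normed_vector) \<Rightarrow> real^'n \<Rightarrow> 'b" where
  "ipd [] f = f"
| "ipd (i # is) f = pd i (ipd is f)"

definition smooth_on :: "(real^'n::finite) set \<Rightarrow> (real^'n \<Rightarrow> 'b::real_normed_vector) \<Rightarrow> bool" where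
  "smooth_on U f \<longleftrightarrow> (\<forall>is. \<forall>x\<in>U. ipd is f differentiable (at x))"

definition immersion_on :: "(real^'n::finite) set \<Rightarrow> (real^'n \<Rightarrow> real^'m::finite) \<Rightarrow> bool" where
  "immersion_on U X \<longleftrightarrow> (\<forall>x\<in>U. inj (frechet_derivative X (at x)))"

definition metric :: "(real^'n::finite \<Rightarrow> real^'m::finite) \<Rightarrow> real^'n \<Rightarrow> real^'n^'n" where
  "metric X x = (\<chi> i j. pd i X x \<bullet> pd j X x)"

definition ginv :: "(real^'n::finite \<Rightarrow> real^'m::finite) \<Rightarrow> real^'n \<Rightarrow> real^'n^'n" where
  "ginv X x = matrix_inv (metric X x)"

definition christ :: "(real^'n::finite \<Rightarrow> real^'m::finite) \<Rightarrow> 'n \<Rightarrow> 'n \<Rightarrow> 'n \<Rightarrow> real^'n \<Rightarrow> real" where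
  "christ X k i j x = (1/2) * (\<Sum>l\<in>UNIV. ginv X x $ k $ l *
      (pd i (\<lambda>y. metric X y $ j $ l) x + pd j (\<lambda>y. metric X y $ i $ l) x
       - pd l (\<lambda>y. metric X y $ i $ j) x))"

text \<open>Orthogonal projection onto the tangent space of the unit sphere at p; the Levi-Civita
  connection of S^(n+1) along X is the projection of the ambient derivative.\<close>
definition sph_proj :: "real^'m::finite \<Rightarrow> real^'m \<Rightarrow> real^'m" where
  "sph_proj p v = v - (v \<bullet> p) *\<^sub>R p"

definition pull_conn :: "(real^'n::finite \<Rightarrow> real^'m::finite) \<Rightarrow> 'n \<Rightarrow> (real^'n \<Rightarrow> real^'m) \<Rightarrow> real^'n \<Rightarrow> real^'m" where
  "pull_conn X i V x = sph_proj (X x) (pd i V x)"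

definition hess_map :: "(real^'n::finite \<Rightarrow> real^'m::finite) \<Rightarrow> 'n \<Rightarrow> 'n \<Rightarrow> real^'n \<Rightarrow> real^'m" where
  "hess_map X i j x = pull_conn X i (pd j X) x - (\<Sum>k\<in>UNIV. christ X k i j x *\<^sub>R pd k X x)"

definition tension :: "(real^'n::finite \<Rightarrow> real^'m::finite) \<Rightarrow> real^'n \<Rightarrow> real^'m" where
  "tension X x = (\<Sum>i\<in>UNIV. \<Sum>j\<in>UNIV. ginv X x $ i $ j *\<^sub>R hess_map X i j x)"

text \<open>Mean curvature vector field H = (1/n) trace B (for a submanifold, tension = trace B).\<close>
definition mean_curv :: "(real^'n::finite \<Rightarrow> real^'m::finite) \<Rightarrow> real^'n \<Rightarrow> real^'m" where
  "mean_curv X x = (1 / real CARD('n)) *\<^sub>R tension X x"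

definition rough_lap :: "(real^'n::finite \<Rightarrow> real^'m::finite) \<Rightarrow> (real^'n \<Rightarrow> real^'m) \<Rightarrow> real^'n \<Rightarrow> real^'m" where
  "rough_lap X V x = (\<Sum>i\<in>UNIV. \<Sum>j\<in>UNIV. ginv X x $ i $ j *\<^sub>R
      (pull_conn X i (pull_conn X j V) x - (\<Sum>k\<in>UNIV. christ X k i j x *\<^sub>R pull_conn X k V x)))"

text \<open>Curvature tensor of the unit sphere, convention R(u,v)w = nabla_u nabla_v w - nabla_v nabla_u w - nabla_[u,v] w.\<close>
definition sphere_R :: "real^'m::finite \<Rightarrow> real^'m \<Rightarrow> real^'m \<Rightarrow> real^'m" where
  "sphere_R u v w = (v \<bullet> w) *\<^sub>R u - (u \<bullet> w) *\<^sub>R v"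

definition bitension :: "(real^'n::finite \<Rightarrow> real^'m::finite) \<Rightarrow> real^'n \<Rightarrow> real^'m" where
  "bitension X x = rough_lap X (tension X) x
      + (\<Sum>i\<in>UNIV. \<Sum>j\<in>UNIV. ginv X x $ i $ j *\<^sub>R sphere_R (tension X x) (pd i X x) (pd j X x))"

definition biharmonic_on :: "(real^'n::finite) set \<Rightarrow> (real^'n \<Rightarrow> real^'m::finite) \<Rightarrow> bool" where
  "biharmonic_on U X \<longleftrightarrow> (\<forall>x\<in>U. bitension X x = 0)"

definition lap :: "(real^'n::finite \<Rightarrow> real^'m::finite) \<Rightarrow> (real^'n \<Rightarrow> real) \<Rightarrow> real^'n \<Rightarrow> real" where
  "lap X f x = (\<Sum>i\<in>UNIV. \<Sum>j\<in>UNIV. ginv X x $ i $ j *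
      (pd i (pd j f) x - (\<Sum>k\<in>UNIV. christ X k i j x * pd k f x)))"

end

(* Let \<tau> be the tension field of the immersion X into the unit sphere (\<tau> = n H).  The coordinate
   functions satisfy \<Delta>X = \<tau> - n X, since the normal part of the second derivatives of X along
   the sphere is -g X.  Hence \<Delta>\<Delta>x_i = \<phi> x_i says \<Delta>\<tau> = n (\<tau> - n X) + \<phi> X, whose component
   tangent to the sphere is n \<tau>, because \<tau> is orthogonal to X.  On the other hand, computing the
   rough Laplacian of \<tau> and adding the curvature term of the sphere gives
   \<tau>\<^sub>2 = (\<Delta>\<tau>)\<^sup>T + n \<tau>.  So biharmonicity means 2 n \<tau> = 0. *)

theory Submission
  imports Defs
begin

section \<open>Partial derivatives\<close>

lemma pd_eq_derivative: "(f has_derivative f') (at x) \<Longrightarrow> pd i f x = f' (axis i 1)"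
  unfolding pd_def using frechet_derivative_at by metis

lemma pd_cong:
  assumes "open U" "x \<in> U" "\<And>y. y \<in> U \<Longrightarrow> f y = g y"
  shows "pd i f x = pd i g x"
proof -
  have "(f has_derivative D) (at x) \<longleftrightarrow> (g has_derivative D) (at x)" for D
    using has_derivative_transform_within_open[OF _ assms(1,2), of f D UNIV g]
      has_derivative_transform_within_open[OF _ assms(1,2), of g D UNIV f] assms(3) by auto
  then show ?thesis unfolding pd_def frechet_derivative_def by simp
qed

lemma pd_const [simp]: "pd i (\<lambda>y. c) = (\<lambda>y. 0)"
  by (simp add: pd_def fun_eq_iff)

lemma pd_bilinear:
  assumes "bounded_bilinear bop" "f differentiable at x" "g differentiable at x"
  shows "pd i (\<lambda>y. bop (f y) (g y)) x = bop (f x) (pd i g x) + bop (pd i f x) (g x)"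
  using bounded_bilinear.FDERIV[OF assms(1) assms(2,3)[unfolded frechet_derivative_works]]
  by (subst pd_eq_derivative, assumption) (simp add: pd_def)

lemma pd_linear:
  assumes "bounded_linear L" "f differentiable at x"
  shows "pd i (\<lambda>y. L (f y)) x = L (pd i f x)"
  using bounded_linear.has_derivative[OF assms(1) assms(2)[unfolded frechet_derivative_works]]
  by (subst pd_eq_derivative, assumption) (simp add: pd_def)

lemma pd_diff:
  assumes "f differentiable at x" "g differentiable at x"
  shows "pd i (\<lambda>y. f y - g y) x = pd i f x - pd i g x"
  using has_derivative_diff[OF assms[unfolded frechet_derivative_works]]
  by (subst pd_eq_derivative, assumption) (simp add: pd_def)

lemma pd_add:
  assumes "f differentiable at x" "g differentiable at x"
  shows "pd i (\<lambda>y. f y + g y) x = pd i f x + pd i g x"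
  using has_derivative_add[OF assms[unfolded frechet_derivative_works]]
  by (subst pd_eq_derivative, assumption) (simp add: pd_def)

lemma pd_inverse:
  fixes d :: "real^'n::finite \<Rightarrow> real"
  assumes "d differentiable at x" "d x \<noteq> 0"
  shows "pd i (\<lambda>y. inverse (d y)) x = - (inverse (d x) * pd i d x * inverse (d x))"
  using Deriv.has_derivative_inverse[OF assms(2) assms(1)[unfolded frechet_derivative_works]]
  by (subst pd_eq_derivative, assumption) (simp add: pd_def)

lemma differentiable_cong_open:
  assumes "open U" "x \<in> U" "\<And>y. y \<in> U \<Longrightarrow> f y = g y" "f differentiable at x"
  shows "g differentiable at x"
  using assms unfolding differentiable_def by (meson has_derivative_transform_within_open)

lemma differentiable_bilinear:
  assumes "bounded_bilinear bop" "f differentiable at x" "g differentiable at x"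
  shows "(\<lambda>y. bop (f y) (g y)) differentiable at x"
  using bounded_bilinear.FDERIV[OF assms(1) assms(2,3)[unfolded frechet_derivative_works]]
  unfolding differentiable_def by blast

lemma differentiable_bounded_linear:
  assumes "bounded_linear L" "f differentiable at x"
  shows "(\<lambda>y. L (f y)) differentiable at x"
  using bounded_linear.has_derivative[OF assms(1) assms(2)[unfolded frechet_derivative_works]]
  unfolding differentiable_def by blast

lemma pd_component:
  "f differentiable at x \<Longrightarrow> pd i (\<lambda>y. f y $ c) x = pd i f x $ c"
  by (rule pd_linear[OF bounded_linear_vec_nth])

lemma pd_diff_scaleR:
  assumes "f differentiable at x" "g differentiable at x"
  shows "pd i (\<lambda>y. f y - a *\<^sub>R g y) x = pd i f x - a *\<^sub>R pd i g x"
  using pd_diff[OF assms(1) differentiable_bounded_linear[OF bounded_linear_scaleR_right assms(2)]]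
    pd_linear[OF bounded_linear_scaleR_right assms(2)]
  by simp

lemma inner_pd_eq_neg_if_inner_const:
  assumes "open U" "y \<in> U" "\<And>z. z \<in> U \<Longrightarrow> F z \<bullet> G z = c"
    and "F differentiable at y" "G differentiable at y"
  shows "pd j F y \<bullet> G y = - (F y \<bullet> pd j G y)"
proof -
  have "pd j (\<lambda>z. F z \<bullet> G z) y = pd j (\<lambda>z. c) y"
    using assms(3) by (rule pd_cong[OF assms(1,2)])
  then show ?thesis
    using pd_bilinear[OF bounded_bilinear_inner assms(4,5)] by simp
qed

section \<open>Smoothness\<close>

fun partials_differentiable ::
  "nat \<Rightarrow> (real^'n::finite) set \<Rightarrow> (real^'n \<Rightarrow> 'b::real_normed_vector) \<Rightarrow> bool" where
  "partials_differentiable 0 U f \<longleftrightarrow> (\<forall>x\<in>U. f differentiable at x)"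
| "partials_differentiable (Suc k) U f \<longleftrightarrow>
     (\<forall>x\<in>U. f differentiable at x) \<and> (\<forall>i. partials_differentiable k U (pd i f))"

lemma partials_differentiable_imp_differentiable:
  "partials_differentiable k U f \<Longrightarrow> x \<in> U \<Longrightarrow> f differentiable at x"
  by (cases k) auto

lemma partials_differentiable_Suc_imp:
  "partials_differentiable (Suc k) U f \<Longrightarrow> partials_differentiable k U f"
  by (induction k arbitrary: f) auto

lemma partials_differentiable_cong:
  assumes "open U" "\<And>y. y \<in> U \<Longrightarrow> f y = g y" "partials_differentiable k U f"
  shows "partials_differentiable k U g"
  using assms(2,3)
proof (induction k arbitrary: f g)
  case 0
  then show ?case
    using assms(1) by (auto intro: differentiable_cong_open)
next
  case (Suc k)
  have "partials_differentiable k U (pd i g)" for i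
  proof (rule Suc.IH)
    show "pd i f y = pd i g y" if "y \<in> U" for y
      using pd_cong[OF assms(1) that Suc.prems(1)] .
    show "partials_differentiable k U (pd i f)"
      using Suc.prems(2) by simp
  qed
  moreover have "\<forall>x\<in>U. g differentiable at x"
    using differentiable_cong_open[OF assms(1) _ Suc.prems(1)] Suc.prems(2) by simp
  ultimately show ?case by simp
qed

lemma partials_differentiable_const: "partials_differentiable k U (\<lambda>y. c)"
  by (induction k arbitrary: c) simp_all

lemma partials_differentiable_add:
  assumes "open U"
  shows "partials_differentiable k U f \<Longrightarrow> partials_differentiable k U g \<Longrightarrow>
         partials_differentiable k U (\<lambda>y. f y + g y)"
proof (induction k arbitrary: f g)
  case (Suc k)
  have "partials_differentiable k U (pd i (\<lambda>y. f y + g y))" for i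
  proof (rule partials_differentiable_cong[OF assms])
    show "pd i f y + pd i g y = pd i (\<lambda>y. f y + g y) y" if "y \<in> U" for y
      using Suc.prems that by (intro pd_add[symmetric]) (auto intro: partials_differentiable_imp_differentiable)
    show "partials_differentiable k U (\<lambda>y. pd i f y + pd i g y)"
      using Suc by simp
  qed
  then show ?case using Suc.prems by auto
qed auto

lemma partials_differentiable_bilinear:
  assumes "open U" "bounded_bilinear bop"
  shows "partials_differentiable k U f \<Longrightarrow> partials_differentiable k U g \<Longrightarrow>
         partials_differentiable k U (\<lambda>y. bop (f y) (g y))"
proof (induction k arbitrary: f g)
  case 0
  then show ?case by (auto intro: differentiable_bilinear[OF assms(2)])
next
  case (Suc k)
  have "partials_differentiable k U (pd i (\<lambda>y. bop (f y) (g y)))" for i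
  proof (rule partials_differentiable_cong[OF assms(1)])
    show "bop (f y) (pd i g y) + bop (pd i f y) (g y) = pd i (\<lambda>y. bop (f y) (g y)) y" if "y \<in> U" for y
      using Suc.prems that
      by (intro pd_bilinear[symmetric] assms) (auto intro: partials_differentiable_imp_differentiable)
    show "partials_differentiable k U (\<lambda>y. bop (f y) (pd i g y) + bop (pd i f y) (g y))"
      using Suc partials_differentiable_Suc_imp[of k U f] partials_differentiable_Suc_imp[of k U g]
      by (intro partials_differentiable_add assms) auto
  qed
  then show ?case
    using Suc.prems by (auto intro: differentiable_bilinear[OF assms(2)])
qed

lemma partials_differentiable_linear:
  assumes "open U" "bounded_linear L"
  shows "partials_differentiable k U f \<Longrightarrow> partials_differentiable k U (\<lambda>y. L (f y))"
proof (induction k arbitrary: f)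
  case 0
  then show ?case by (auto intro: differentiable_bounded_linear[OF assms(2)])
next
  case (Suc k)
  have "partials_differentiable k U (pd i (\<lambda>y. L (f y)))" for i
  proof (rule partials_differentiable_cong[OF assms(1)])
    show "L (pd i f y) = pd i (\<lambda>y. L (f y)) y" if "y \<in> U" for y
      using Suc.prems that
      by (intro pd_linear[symmetric] assms) (auto intro: partials_differentiable_imp_differentiable)
    show "partials_differentiable k U (\<lambda>y. L (pd i f y))"
      using Suc by simp
  qed
  then show ?case
    using Suc.prems by (auto intro: differentiable_bounded_linear[OF assms(2)])
qed

lemma partials_differentiable_inverse:
  fixes d :: "real^'n::finite \<Rightarrow> real"
  assumes "open U" "\<And>y. y \<in> U \<Longrightarrow> d y \<noteq> 0"
  shows "partials_differentiable k U d \<Longrightarrow> partials_differentiable k U (\<lambda>y. inverse (d y))"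
proof (induction k)
  case 0
  then show ?case using assms(2) by auto
next
  case (Suc k)
  have IH: "partials_differentiable k U (\<lambda>y. inverse (d y))"
    using Suc partials_differentiable_Suc_imp by blast
  have "partials_differentiable k U (pd i (\<lambda>y. inverse (d y)))" for i
  proof (rule partials_differentiable_cong[OF assms(1)])
    show "- (inverse (d y) * pd i d y * inverse (d y)) = pd i (\<lambda>y. inverse (d y)) y" if "y \<in> U" for y
      using Suc.prems that assms(2)
      by (intro pd_inverse[symmetric]) (auto intro: partials_differentiable_imp_differentiable)
    show "partials_differentiable k U (\<lambda>y. - (inverse (d y) * pd i d y * inverse (d y)))"
      using Suc.prems IH
      by (intro partials_differentiable_linear[OF assms(1), where L=uminus]
          partials_differentiable_bilinear[OF assms(1) bounded_bilinear_mult]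
          bounded_linear_minus[OF bounded_linear_ident]) auto
  qed
  then show ?case using Suc.prems assms(2) by auto
qed

lemma partials_differentiable_sum:
  assumes "open U" "finite A"
  shows "(\<And>a. a \<in> A \<Longrightarrow> partials_differentiable k U (f a)) \<Longrightarrow>
         partials_differentiable k U (\<lambda>y. \<Sum>a\<in>A. f a y)"
  using assms(2)
  by (induction A rule: finite_induct)
    (simp_all add: partials_differentiable_const partials_differentiable_add[OF assms(1)])

lemma partials_differentiable_prod:
  fixes f :: "'i \<Rightarrow> real^'n::finite \<Rightarrow> real"
  assumes "open U" "finite A"
  shows "(\<And>a. a \<in> A \<Longrightarrow> partials_differentiable k U (f a)) \<Longrightarrow>
         partials_differentiable k U (\<lambda>y. \<Prod>a\<in>A. f a y)"
  using assms(2)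
  by (induction A rule: finite_induct)
    (simp_all add: partials_differentiable_const
      partials_differentiable_bilinear[OF assms(1) bounded_bilinear_mult])

lemma smooth_on_imp_differentiable: "smooth_on U f \<Longrightarrow> x \<in> U \<Longrightarrow> f differentiable at x"
  unfolding smooth_on_def by (metis ipd.simps(1))

lemma ipd_snoc: "ipd (is @ [i]) f = ipd is (pd i f)"
  by (induction "is") auto

lemma smooth_on_pd: "smooth_on U f \<Longrightarrow> smooth_on U (pd i f)"
  unfolding smooth_on_def by (metis ipd_snoc)

lemma partials_differentiable_imp_ipd_differentiable:
  "partials_differentiable (length is) U f \<Longrightarrow> x \<in> U \<Longrightarrow> ipd is f differentiable at x"
  by (induction "is" arbitrary: f rule: rev_induct) (auto simp: ipd_snoc)

lemma smooth_on_iff_partials_differentiable: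
  "smooth_on U f \<longleftrightarrow> (\<forall>k. partials_differentiable k U f)"
proof (intro iffI allI)
  show "partials_differentiable k U f" if "smooth_on U f" for k
    using that
    by (induction k arbitrary: f) (auto intro: smooth_on_imp_differentiable smooth_on_pd)
qed (auto simp: smooth_on_def intro: partials_differentiable_imp_ipd_differentiable)

lemma smooth_on_const: "smooth_on U (\<lambda>y. c)"
  by (simp add: smooth_on_iff_partials_differentiable partials_differentiable_const)

lemma smooth_on_cong: "open U \<Longrightarrow> (\<And>y. y \<in> U \<Longrightarrow> f y = g y) \<Longrightarrow> smooth_on U f \<Longrightarrow> smooth_on U g"
  unfolding smooth_on_iff_partials_differentiable using partials_differentiable_cong by blast

lemma smooth_on_add: "open U \<Longrightarrow> smooth_on U f \<Longrightarrow> smooth_on U g \<Longrightarrow> smooth_on U (\<lambda>y. f y + g y)"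
  unfolding smooth_on_iff_partials_differentiable using partials_differentiable_add by blast

lemma smooth_on_bilinear:
  "open U \<Longrightarrow> bounded_bilinear bop \<Longrightarrow> smooth_on U f \<Longrightarrow> smooth_on U g \<Longrightarrow>
   smooth_on U (\<lambda>y. bop (f y) (g y))"
  unfolding smooth_on_iff_partials_differentiable using partials_differentiable_bilinear by blast

lemma smooth_on_linear:
  "open U \<Longrightarrow> bounded_linear L \<Longrightarrow> smooth_on U f \<Longrightarrow> smooth_on U (\<lambda>y. L (f y))"
  unfolding smooth_on_iff_partials_differentiable using partials_differentiable_linear by blast

lemma smooth_on_inverse:
  "open U \<Longrightarrow> (\<And>y. y \<in> U \<Longrightarrow> d y \<noteq> 0) \<Longrightarrow> smooth_on U d \<Longrightarrow>
   smooth_on U (\<lambda>y. inverse (d y) :: real)"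
  unfolding smooth_on_iff_partials_differentiable using partials_differentiable_inverse by blast

lemma smooth_on_sum:
  "open U \<Longrightarrow> finite A \<Longrightarrow> (\<And>a. a \<in> A \<Longrightarrow> smooth_on U (f a)) \<Longrightarrow>
   smooth_on U (\<lambda>y. \<Sum>a\<in>A. f a y)"
  unfolding smooth_on_iff_partials_differentiable using partials_differentiable_sum by blast

lemma smooth_on_prod:
  "open U \<Longrightarrow> finite A \<Longrightarrow> (\<And>a. a \<in> A \<Longrightarrow> smooth_on U (f a)) \<Longrightarrow>
   smooth_on U (\<lambda>y. \<Prod>a\<in>A. f a y :: real)"
  unfolding smooth_on_iff_partials_differentiable using partials_differentiable_prod by blast

lemma smooth_on_diff: "open U \<Longrightarrow> smooth_on U f \<Longrightarrow> smooth_on U g \<Longrightarrow> smooth_on U (\<lambda>y. f y - g y)"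
  using smooth_on_add[of U f "\<lambda>y. - g y"]
    smooth_on_linear[OF _ bounded_linear_minus[OF bounded_linear_ident], of U g]
  by simp

lemma smooth_on_mult: "open U \<Longrightarrow> smooth_on U f \<Longrightarrow> smooth_on U g \<Longrightarrow> smooth_on U (\<lambda>y. f y * g y :: real)"
  by (rule smooth_on_bilinear[OF _ bounded_bilinear_mult])

lemma smooth_on_scaleR: "open U \<Longrightarrow> smooth_on U f \<Longrightarrow> smooth_on U g \<Longrightarrow> smooth_on U (\<lambda>y. f y *\<^sub>R g y)"
  by (rule smooth_on_bilinear[OF _ bounded_bilinear_scaleR])

lemma smooth_on_inner: "open U \<Longrightarrow> smooth_on U f \<Longrightarrow> smooth_on U g \<Longrightarrow> smooth_on U (\<lambda>y. f y \<bullet> g y)"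
  by (rule smooth_on_bilinear[OF _ bounded_bilinear_inner])

lemma smooth_on_det:
  fixes M :: "real^'n::finite \<Rightarrow> real^'k::finite^'k"
  assumes "open U" "\<And>a b. smooth_on U (\<lambda>y. M y $ a $ b)"
  shows "smooth_on U (\<lambda>y. det (M y))"
  unfolding det_def
  by (intro smooth_on_sum smooth_on_mult smooth_on_prod smooth_on_const assms finite_permutations) auto

section \<open>Immersions\<close>

lemma matrix_inv_right: "invertible A \<Longrightarrow> A ** matrix_inv A = mat 1"
  unfolding invertible_def matrix_inv_def
  by (rule someI_ex[where P="\<lambda>B. A ** B = mat 1 \<and> B ** A = mat 1", THEN conjunct1])

lemma matrix_inv_left: "invertible A \<Longrightarrow> matrix_inv A ** A = mat 1"
  unfolding invertible_def matrix_inv_def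
  by (rule someI_ex[where P="\<lambda>B. A ** B = mat 1 \<and> B ** A = mat 1", THEN conjunct2])

lemma matrix_inv_cramer:
  fixes A :: "real^'n::finite^'n"
  assumes "det A \<noteq> 0"
  shows "matrix_inv A $ k $ j = det (\<chi> a l. if l = k then axis j 1 $ a else A $ a $ l) / det A"
proof -
  have "A *v (matrix_inv A *v axis j 1) = axis j 1"
    using assms by (simp add: matrix_vector_mul_assoc matrix_inv_right invertible_det_nz)
  then have "matrix_inv A *v axis j 1 = (\<chi> k. det (\<chi> a l. if l = k then axis j 1 $ a else A $ a $ l) / det A)"
    using cramer[OF assms] by blast
  moreover have "(matrix_inv A *v axis j 1) $ k = matrix_inv A $ k $ j"
    by (simp add: matrix_vector_mult_def axis_def if_distrib[of "\<lambda>t. _ * t"] cong: if_cong)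
  ultimately show ?thesis by simp
qed

lemma frechet_derivative_eq_sum_pd:
  assumes "X differentiable at x"
  shows "frechet_derivative X (at x) v = (\<Sum>i\<in>UNIV. v $ i *\<^sub>R pd i X x)"
proof -
  have "v = (\<Sum>i\<in>UNIV. v $ i *\<^sub>R axis i 1)"
    by (simp add: vec_eq_iff axis_def if_distrib[of "\<lambda>t. _ * t"] cong: if_cong)
  then have "frechet_derivative X (at x) v = frechet_derivative X (at x) (\<Sum>i\<in>UNIV. v $ i *\<^sub>R axis i 1)"
    by simp
  also have "\<dots> = (\<Sum>i\<in>UNIV. v $ i *\<^sub>R frechet_derivative X (at x) (axis i 1))"
    using linear_frechet_derivative[OF assms] by (simp add: linear_sum linear_scale)
  finally show ?thesis by (simp add: pd_def)
qed

lemma inner_metric_mult: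
  assumes "X differentiable at x"
  shows "v \<bullet> (metric X x *v v) = frechet_derivative X (at x) v \<bullet> frechet_derivative X (at x) v"
  by (simp add: frechet_derivative_eq_sum_pd[OF assms] inner_vec_def[of v] matrix_vector_mult_def
      metric_def inner_sum_left inner_sum_right sum_distrib_left mult.assoc mult.left_commute)
    (intro sum.cong refl, simp add: inner_commute)

lemma det_metric_nonzero:
  fixes X :: "real^'n::finite \<Rightarrow> real^'m::finite"
  assumes "X differentiable at x" "inj (frechet_derivative X (at x))"
  shows "det (metric X x) \<noteq> 0"
proof -
  have "v = 0" if "metric X x *v v = 0" for v
  proof -
    have "frechet_derivative X (at x) v \<bullet> frechet_derivative X (at x) v = 0"
      using that inner_metric_mult[OF assms(1), of v] by simp
    then show "v = 0"
      using assms linear_frechet_derivative by (metis inner_eq_zero_iff linear_0 injD)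
  qed
  then have "invertible (metric X x)"
    using invertible_left_inverse matrix_left_invertible_ker by blast
  then show ?thesis using invertible_det_nz by blast
qed

text \<open>The Laplacian of the coordinate functions of a vector-valued map: unlike \<^const>\<open>rough_lap\<close>,
  nothing is projected onto the sphere.\<close>

definition lap_vec ::
  "(real^'n::finite \<Rightarrow> real^'m::finite) \<Rightarrow> (real^'n \<Rightarrow> real^'k::finite) \<Rightarrow> real^'n \<Rightarrow> real^'k" where
  "lap_vec X F y = (\<Sum>i\<in>UNIV. \<Sum>j\<in>UNIV. ginv X y $ i $ j *\<^sub>R
      (pd i (pd j F) y - (\<Sum>k\<in>UNIV. christ X k i j y *\<^sub>R pd k F y)))"

locale smooth_immersion =
  fixes U :: "(real^'n::finite) set" and X :: "real^'n \<Rightarrow> real^'m::finite"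
  assumes open_U: "open U" and smooth_X: "smooth_on U X" and immersion: "immersion_on U X"
begin

lemma det_metric_nonzero_on: "y \<in> U \<Longrightarrow> det (metric X y) \<noteq> 0"
  using det_metric_nonzero smooth_on_imp_differentiable[OF smooth_X] immersion
  unfolding immersion_on_def by blast

lemma smooth_on_metric: "smooth_on U (\<lambda>y. metric X y $ i $ j)"
  unfolding metric_def by (simp add: smooth_on_inner open_U smooth_on_pd smooth_X)

lemma smooth_on_ginv: "smooth_on U (\<lambda>y. ginv X y $ k $ j)"
proof (rule smooth_on_cong[OF open_U])
  let ?C = "\<lambda>y. \<chi> a l. if l = k then axis j 1 $ a else metric X y $ a $ l"
  show "det (?C y) * inverse (det (metric X y)) = ginv X y $ k $ j" if "y \<in> U" for y
    using matrix_inv_cramer[OF det_metric_nonzero_on[OF that]]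
    by (simp add: ginv_def divide_inverse)
  have "smooth_on U (\<lambda>y. ?C y $ a $ b)" for a b
    by (cases "b = k") (simp_all add: smooth_on_const smooth_on_metric)
  then show "smooth_on U (\<lambda>y. det (?C y) * inverse (det (metric X y)))"
    by (intro smooth_on_mult open_U smooth_on_inverse smooth_on_det smooth_on_metric
        det_metric_nonzero_on)
qed

lemma smooth_on_christ: "smooth_on U (christ X k i j)"
  unfolding christ_def[abs_def]
  by (intro smooth_on_mult smooth_on_const smooth_on_sum smooth_on_diff smooth_on_add
      smooth_on_pd smooth_on_metric smooth_on_ginv open_U finite_class.finite_UNIV)

lemma smooth_on_tension: "smooth_on U (tension X)"
  unfolding tension_def[abs_def] hess_map_def pull_conn_def sph_proj_def
  by (intro smooth_on_sum smooth_on_scaleR smooth_on_diff smooth_on_inner smooth_on_pd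
      smooth_on_christ smooth_on_ginv smooth_X open_U finite_class.finite_UNIV)

lemma trace_ginv_metric:
  assumes "y \<in> U"
  shows "(\<Sum>i\<in>UNIV. \<Sum>j\<in>UNIV. ginv X y $ i $ j * (pd i X y \<bullet> pd j X y)) = real CARD('n)"
proof -
  have "ginv X y ** metric X y = mat 1"
    using matrix_inv_left det_metric_nonzero_on[OF assms] invertible_det_nz
    unfolding ginv_def by blast
  then have "(ginv X y ** metric X y) $ i $ i = 1" for i
    by (simp add: mat_def)
  then have "(\<Sum>j\<in>UNIV. ginv X y $ i $ j * (pd j X y \<bullet> pd i X y)) = 1" for i
    by (simp add: matrix_matrix_mult_def metric_def)
  then show ?thesis by (simp add: inner_commute)
qed

lemma lap_component:
  assumes "smooth_on U F" "y \<in> U"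
  shows "lap X (\<lambda>z. F z $ c) y = lap_vec X F y $ c"
proof -
  have "pd i (pd j (\<lambda>z. F z $ c)) y = pd i (\<lambda>z. pd j F z $ c) y" for i j
    using pd_component smooth_on_imp_differentiable[OF assms(1)]
    by (intro pd_cong[OF open_U assms(2)]) blast
  also have "\<dots> i j = pd i (pd j F) y $ c" for i j
    using pd_component smooth_on_imp_differentiable[OF smooth_on_pd[OF assms(1)] assms(2)] .
  finally show ?thesis
    unfolding lap_def lap_vec_def
    by (simp add: pd_component[OF smooth_on_imp_differentiable[OF assms]])
qed

lemma lap_cong:
  assumes "y \<in> U" "\<And>z. z \<in> U \<Longrightarrow> f z = g z"
  shows "lap X f y = lap X g y"
proof -
  have "pd k f y = pd k g y" for k
    using pd_cong[OF open_U assms] .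
  moreover have "pd i (pd j f) y = pd i (pd j g) y" for i j
    using assms pd_cong[OF open_U _ assms(2)] by (intro pd_cong[OF open_U]) auto
  ultimately show ?thesis
    unfolding lap_def by simp
qed

lemma lap_vec_diff_scaleR:
  fixes F G :: "real^'n \<Rightarrow> real^'k::finite"
  assumes F: "smooth_on U F" and G: "smooth_on U G" and y: "y \<in> U"
  shows "lap_vec X (\<lambda>z. F z - a *\<^sub>R G z) y = lap_vec X F y - a *\<^sub>R lap_vec X G y"
proof -
  note differentiable = smooth_on_imp_differentiable
  have "pd i (pd j (\<lambda>z. F z - a *\<^sub>R G z)) y = pd i (\<lambda>z. pd j F z - a *\<^sub>R pd j G z) y"
    for i j
    using pd_diff_scaleR differentiable[OF F] differentiable[OF G]
    by (intro pd_cong[OF open_U y]) blast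
  also have "\<dots> i j = pd i (pd j F) y - a *\<^sub>R pd i (pd j G) y" for i j
    using pd_diff_scaleR differentiable[OF smooth_on_pd[OF F] y] differentiable[OF smooth_on_pd[OF G] y] .
  finally have second:
    "pd i (pd j (\<lambda>z. F z - a *\<^sub>R G z)) y = pd i (pd j F) y - a *\<^sub>R pd i (pd j G) y" for i j .
  have christ_sum: "(\<Sum>k\<in>UNIV. christ X k i j y *\<^sub>R (pd k F y - a *\<^sub>R pd k G y))
      = (\<Sum>k\<in>UNIV. christ X k i j y *\<^sub>R pd k F y) - a *\<^sub>R (\<Sum>k\<in>UNIV. christ X k i j y *\<^sub>R pd k G y)"
    for i j
    by (simp add: scaleR_diff_right sum_subtractf scaleR_sum_right mult.commute)
  show ?thesis
    unfolding lap_vec_def second pd_diff_scaleR[OF differentiable[OF F y] differentiable[OF G y]] christ_sum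
    by (simp add: scaleR_diff_right scaleR_sum_right sum_subtractf mult_ac)
qed

end

lemma linear_sph_proj: "linear (sph_proj p)"
  by (rule linearI) (simp_all add: sph_proj_def algebra_simps)

section \<open>Immersions into the unit sphere\<close>

locale sphere_immersion = smooth_immersion U X
  for U :: "(real^'n::finite) set" and X :: "real^'n \<Rightarrow> real^'m::finite" +
  assumes on_sphere: "\<And>y. y \<in> U \<Longrightarrow> X y \<bullet> X y = 1"
begin

lemma position_orthogonal_pd:
  assumes "y \<in> U"
  shows "X y \<bullet> pd j X y = 0"
  using inner_pd_eq_neg_if_inner_const[OF open_U assms on_sphere]
    smooth_on_imp_differentiable[OF smooth_X assms]
  by (simp add: inner_commute)

lemma position_inner_pd_pd:
  assumes "y \<in> U"
  shows "X y \<bullet> pd i (pd j X) y = - (pd i X y \<bullet> pd j X y)"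
proof -
  have "\<And>z. z \<in> U \<Longrightarrow> X z \<bullet> pd j X z = 0"
    by (rule position_orthogonal_pd)
  from inner_pd_eq_neg_if_inner_const[OF open_U assms this
      smooth_on_imp_differentiable[OF smooth_X assms]
      smooth_on_imp_differentiable[OF smooth_on_pd[OF smooth_X] assms]]
  show ?thesis by simp
qed

lemma tension_orthogonal_position:
  assumes "y \<in> U"
  shows "tension X y \<bullet> X y = 0"
  using position_orthogonal_pd[OF assms] on_sphere[OF assms]
  by (simp add: tension_def hess_map_def pull_conn_def sph_proj_def inner_sum_left inner_diff_left
      inner_sum_right inner_diff_right inner_commute)

lemma tension_eq_lap_vec_position:
  assumes "y \<in> U"
  shows "tension X y = lap_vec X X y + real CARD('n) *\<^sub>R X y"
proof -
  have "tension X y - lap_vec X X y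
      = (\<Sum>i\<in>UNIV. \<Sum>j\<in>UNIV. ginv X y $ i $ j *\<^sub>R (- (pd i (pd j X) y \<bullet> X y) *\<^sub>R X y))"
    unfolding tension_def lap_vec_def hess_map_def pull_conn_def sph_proj_def
    by (simp add: sum_subtractf[symmetric] algebra_simps)
  also have "\<dots> = (\<Sum>i\<in>UNIV. \<Sum>j\<in>UNIV. ginv X y $ i $ j * (pd i X y \<bullet> pd j X y)) *\<^sub>R X y"
    using position_inner_pd_pd[OF assms] by (simp add: scaleR_sum_left inner_commute)
  finally show ?thesis
    using trace_ginv_metric[OF assms] by (simp add: algebra_simps)
qed

lemma pull_conn_pull_conn_tension:
  assumes "y \<in> U"
  shows "pull_conn X i (pull_conn X j (tension X)) y
       = sph_proj (X y) (pd i (pd j (tension X)) y) + (tension X y \<bullet> pd j X y) *\<^sub>R pd i X y"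
proof -
  let ?T = "tension X"
  note differentiable = smooth_on_imp_differentiable
  have dT: "?T differentiable at y" "pd j ?T differentiable at y"
    using differentiable[OF smooth_on_tension assms] differentiable[OF smooth_on_pd[OF smooth_on_tension] assms] .
  have dX: "X differentiable at y"
    using differentiable[OF smooth_X assms] .
  have "\<And>z. z \<in> U \<Longrightarrow> ?T z \<bullet> X z = 0"
    by (rule tension_orthogonal_position)
  from inner_pd_eq_neg_if_inner_const[OF open_U assms this dT(1) dX]
  have normal: "pd j ?T y \<bullet> X y = - (?T y \<bullet> pd j X y)" .
  have "pull_conn X j ?T = (\<lambda>z. pd j ?T z - (pd j ?T z \<bullet> X z) *\<^sub>R X z)"
    by (simp add: fun_eq_iff pull_conn_def sph_proj_def)
  moreover have "(\<lambda>z. pd j ?T z \<bullet> X z) differentiable at y"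
    by (rule differentiable_bilinear[OF bounded_bilinear_inner dT(2) dX])
  ultimately have deriv: "pd i (pull_conn X j ?T) y
      = pd i (pd j ?T) y - ((pd j ?T y \<bullet> X y) *\<^sub>R pd i X y + pd i (\<lambda>z. pd j ?T z \<bullet> X z) y *\<^sub>R X y)"
    using pd_diff[OF dT(2) differentiable_bilinear[OF bounded_bilinear_scaleR _ dX]]
      pd_bilinear[OF bounded_bilinear_scaleR _ dX]
    by (simp only:)
  have "pd i X y \<bullet> X y = 0"
    using position_orthogonal_pd[OF assms] by (simp add: inner_commute)
  then show ?thesis
    unfolding pull_conn_def[of X i] deriv normal
    using on_sphere[OF assms]
    by (simp add: sph_proj_def algebra_simps)
qed

lemma rough_lap_tension:
  assumes "y \<in> U"
  shows "rough_lap X (tension X) y = sph_proj (X y) (lap_vec X (tension X) y)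
    + (\<Sum>i\<in>UNIV. \<Sum>j\<in>UNIV. ginv X y $ i $ j *\<^sub>R ((tension X y \<bullet> pd j X y) *\<^sub>R pd i X y))"
proof -
  let ?T = "tension X" and ?P = "sph_proj (X y)"
  have "rough_lap X ?T y = (\<Sum>i\<in>UNIV. \<Sum>j\<in>UNIV.
      ginv X y $ i $ j *\<^sub>R (?P (pd i (pd j ?T) y) - (\<Sum>k\<in>UNIV. christ X k i j y *\<^sub>R ?P (pd k ?T y)))
      + ginv X y $ i $ j *\<^sub>R ((?T y \<bullet> pd j X y) *\<^sub>R pd i X y))"
    unfolding rough_lap_def pull_conn_pull_conn_tension[OF assms] pull_conn_def[of X _ ?T y]
    by (intro sum.cong refl) (simp add: algebra_simps)
  also have "\<dots> = ?P (lap_vec X ?T y)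
      + (\<Sum>i\<in>UNIV. \<Sum>j\<in>UNIV. ginv X y $ i $ j *\<^sub>R ((?T y \<bullet> pd j X y) *\<^sub>R pd i X y))"
    unfolding lap_vec_def
    by (simp add: sum.distrib linear_sum[OF linear_sph_proj] linear_scale[OF linear_sph_proj]
        linear_diff[OF linear_sph_proj])
  finally show ?thesis .
qed

lemma bitension_eq:
  assumes "y \<in> U"
  shows "bitension X y = sph_proj (X y) (lap_vec X (tension X) y) + real CARD('n) *\<^sub>R tension X y"
proof -
  have "(\<Sum>i\<in>UNIV. \<Sum>j\<in>UNIV. ginv X y $ i $ j *\<^sub>R ((pd i X y \<bullet> pd j X y) *\<^sub>R tension X y))
      = real CARD('n) *\<^sub>R tension X y"
    using trace_ginv_metric[OF assms] by (simp add: scaleR_sum_left[symmetric])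
  then show ?thesis
    unfolding bitension_def rough_lap_tension[OF assms] sphere_R_def
    by (simp add: scaleR_diff_right sum_subtractf)
qed

lemma lap_lap_position_component:
  assumes "x \<in> U"
  shows "lap X (lap X (\<lambda>y. X y $ c)) x
    = (lap_vec X (tension X) x - real CARD('n) *\<^sub>R (tension X x - real CARD('n) *\<^sub>R X x)) $ c"
proof -
  have smooth: "smooth_on U (\<lambda>y. tension X y - real CARD('n) *\<^sub>R X y)"
    by (intro smooth_on_diff smooth_on_scaleR open_U smooth_on_tension smooth_on_const smooth_X)
  have "lap X (\<lambda>y. X y $ c) z = (tension X z - real CARD('n) *\<^sub>R X z) $ c" if "z \<in> U" for z
    using lap_component[OF smooth_X that] tension_eq_lap_vec_position[OF that] by simp
  then have "lap X (lap X (\<lambda>y. X y $ c)) x = lap X (\<lambda>z. (tension X z - real CARD('n) *\<^sub>R X z) $ c) x"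
    by (rule lap_cong[OF assms])
  also have "\<dots> = (lap_vec X (tension X) x - real CARD('n) *\<^sub>R lap_vec X X x) $ c"
    unfolding lap_component[OF smooth assms] lap_vec_diff_scaleR[OF smooth_on_tension smooth_X assms] ..
  finally show ?thesis
    using tension_eq_lap_vec_position[OF assms] by (simp add: algebra_simps)
qed

lemma tension_eq_0_if_lap_lap_proportional:
  assumes "biharmonic_on U X"
    and "\<And>x c. x \<in> U \<Longrightarrow> lap X (lap X (\<lambda>y. X y $ c)) x = \<phi> x * X x $ c"
    and "x \<in> U"
  shows "tension X x = 0"
proof -
  let ?n = "real CARD('n)" and ?T = "tension X"
  have "lap_vec X ?T x - ?n *\<^sub>R (?T x - ?n *\<^sub>R X x) = \<phi> x *\<^sub>R X x"
    using assms(2,3) lap_lap_position_component[OF assms(3)] by (simp add: vec_eq_iff)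
  then have "lap_vec X ?T x = ?n *\<^sub>R (?T x - ?n *\<^sub>R X x) + \<phi> x *\<^sub>R X x"
    by (simp add: algebra_simps)
  then have "sph_proj (X x) (lap_vec X ?T x) = sph_proj (X x) (?n *\<^sub>R (?T x - ?n *\<^sub>R X x) + \<phi> x *\<^sub>R X x)"
    by (rule arg_cong)
  also have "\<dots> = ?n *\<^sub>R ?T x"
    using on_sphere[OF assms(3)] tension_orthogonal_position[OF assms(3)]
    by (simp add: sph_proj_def algebra_simps)
  finally have "sph_proj (X x) (lap_vec X ?T x) = ?n *\<^sub>R ?T x" .
  then have "bitension X x = (?n + ?n) *\<^sub>R ?T x"
    unfolding bitension_eq[OF assms(3)] scaleR_add_left by simp
  moreover have "bitension X x = 0"
    using assms(1,3) unfolding biharmonic_on_def by blast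
  ultimately show ?thesis by simp
qed

end

theorem corollary4p2:
  fixes U :: "(real^'n::finite) set" and X :: "real^'n \<Rightarrow> real^'m::finite"
  assumes dim: "CARD('m) = CARD('n) + 2"
    and U: "open U"
    and smooth: "smooth_on U X"
    and imm: "immersion_on U X"
    and sphere: "\<forall>x\<in>U. norm (X x) = 1"
    and bih: "biharmonic_on U X"
    and phi: "\<exists>\<phi> :: real^'n \<Rightarrow> real. \<forall>x\<in>U. \<forall>i.
                 lap X (lap X (\<lambda>y. X y $ i)) x = \<phi> x * X x $ i"
  shows "\<forall>x\<in>U. mean_curv X x = 0"
proof -
  interpret sphere_immersion U X
    using U smooth imm sphere by unfold_locales (simp_all add: norm_eq_1)
  obtain \<phi> :: "real^'n \<Rightarrow> real"
    where \<phi>: "\<And>x i. x \<in> U \<Longrightarrow> lap X (lap X (\<lambda>y. X y $ i)) x = \<phi> x * X x $ i"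
    using phi by blast
  show ?thesis
    using tension_eq_0_if_lap_lap_proportional[OF bih \<phi>] by (simp add: mean_curv_def)
qed

end
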